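(* The function $\epsilon_s:[1,\infty)\to\mathbb{R}$ is positive and strictly decreasing, satisfies $\epsilon(\lambda)^2\le\epsilon_s(\lambda)$ for all $\lambda\ge1$, and $\epsilon_s(1)=1$. If moreover $\hat w=\sup_xw(x)<\infty$, then $\epsilon_s(\lambda)\le\hat w/\lfloor\lambda\rfloor$ for all $\lambda\ge1$.
   Context: Let $\pi,q$ be probability densities with respect to a $\sigma$-finite measure $\mu$ on $\mathbb{X}$ with $q>0$ wherever $\pi>0$; $\pi(dx)=\pi(x)\mu(dx)$, $q(dx)=q(x)\mu(dx)$, $\mathbb{S}=\{\pi>0\}$, $w=\pi/q$ on $\mathbb{S}$ and $0$ elsewhere. For integer $N\ge1$, $\epsilon(N)=\int_{\mathbb{S}}\int_{\mathbb{X}^{N-1}}\frac{w(z_1)}{\sum_{i=1}^Nw(z_i)}\prod_{n=2}^Nq(dz_n)\pi(dz_1)$; for $\lambda\ge1$ with $\beta(\lambda)=\lfloor\lambda\rfloor+1-\lambda$, $\epsilon(\lambda)=\beta(\lambda)\epsilon(\lfloor\lambda\rfloor)+(1-\beta(\lambda))\epsilon(\lfloor\lambda\rfloor+1)$, and $\epsilon_s(\lambda)=\int_{\mathbb{S}\times\mathbb{X}^{\lfloor\lambda\rfloor}}\Big(\frac{\beta(\lambda)w(z_1)}{\sum_{i=1}^{\lfloor\lambda\rfloor}w(z_i)}+\frac{(1-\beta(\lambda))w(z_1)}{\sum_{j=1}^{\lfloor\lambda\rfloor+1}w(z_j)}\Big)^2\prod_{n=2}^{\lfloor\lambda\rfloor+1}q(dz_n)\,\pi(dz_1)$.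 *)

theory Defs
  imports "HOL-Analysis.Analysis"
begin

text \<open>Setting: M is the sigma-finite base measure mu on X = space M, p is the density of pi,
 q the density of the proposal, both with respect to M.\<close>

definition supp :: "('a \<Rightarrow> real) \<Rightarrow> 'a set" where
  "supp p = {x. p x > 0}"

definition wt :: "('a \<Rightarrow> real) \<Rightarrow> ('a \<Rightarrow> real) \<Rightarrow> 'a \<Rightarrow> real" where
  "wt p q x = (if p x > 0 then p x / q x else 0)"

definition prodM :: "'a measure \<Rightarrow> ('a \<Rightarrow> real) \<Rightarrow> ('a \<Rightarrow> real) \<Rightarrow> nat \<Rightarrow> (nat \<Rightarrow> 'a) measure" where
  "prodM M p q N = PiM {1..N} (\<lambda>i. if i = 1 then density M (\<lambda>x. ennreal (p x))
                                           else density M (\<lambda>x. ennreal (q x)))"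

definition epsN :: "'a measure \<Rightarrow> ('a \<Rightarrow> real) \<Rightarrow> ('a \<Rightarrow> real) \<Rightarrow> nat \<Rightarrow> real" where
  "epsN M p q N = (\<integral>z. indicator (supp p) (z 1) *
       (wt p q (z 1) / (\<Sum>i\<in>{1..N}. wt p q (z i))) \<partial>prodM M p q N)"

definition betaL :: "real \<Rightarrow> real" where
  "betaL l = real_of_int \<lfloor>l\<rfloor> + 1 - l"

definition epsL :: "'a measure \<Rightarrow> ('a \<Rightarrow> real) \<Rightarrow> ('a \<Rightarrow> real) \<Rightarrow> real \<Rightarrow> real" where
  "epsL M p q l = betaL l * epsN M p q (nat \<lfloor>l\<rfloor>) + (1 - betaL l) * epsN M p q (nat \<lfloor>l\<rfloor> + 1)"

definition epsS :: "'a measure \<Rightarrow> ('a \<Rightarrow> real) \<Rightarrow> ('a \<Rightarrow> real) \<Rightarrow> real \<Rightarrow> real" where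
  "epsS M p q l = (let n = nat \<lfloor>l\<rfloor>; b = betaL l in
     \<integral>z. indicator (supp p) (z 1) *
       (b * wt p q (z 1) / (\<Sum>i\<in>{1..n}. wt p q (z i))
        + (1 - b) * wt p q (z 1) / (\<Sum>j\<in>{1..n+1}. wt p q (z j)))\<^sup>2 \<partial>prodM M p q (n + 1))"

end

theory Submission
  imports Defs "HOL-Probability.Probability"
begin

text \<open>
  Let z_1 be drawn from \<pi> and z_2, z_3, ... from q, all independently, and let
  s_k = w(z_1) / (w(z_1) + ... + w(z_k)) be the normalised weight of z_1 among the first k
  draws. Then \<epsilon>(k) = E s_k and \<epsilon>_s(\<lambda>) = E (\<beta> s_n + (1 - \<beta>) s_(n+1))^2 with n = \<lfloor>\<lambda>\<rfloor>
  and \<beta> = \<beta>(\<lambda>). Almost surely 0 < s_(n+1) \<le> s_n \<le> 1, with strict inequality on an event of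
  positive probability, so this second moment is positive and strictly increasing in \<beta>; at
  \<beta> = 0 it coincides with the value for n + 1 and \<beta> = 1, which yields strict monotonicity
  across integers as well. Jensen's inequality gives \<epsilon>(\<lambda>)^2 \<le> \<epsilon>_s(\<lambda>), and s_1 = 1 gives
  \<epsilon>_s(1) = 1. Finally \<epsilon>_s(\<lambda>) \<le> E s_n^2 \<le> \<epsilon>(n), and after changing the law of z_1 from
  \<pi> = w q to q, exchangeability of the i.i.d. draws gives
  n \<epsilon>(n) = E_q [(w(z_1)^2 + ... + w(z_n)^2) / (w(z_1) + ... + w(z_n))] \<le> sup w.
\<close>

lemma (in prob_space) square_expectation_le:
  fixes X :: "'a \<Rightarrow> real"
  assumes "integrable M X" "integrable M (\<lambda>x. (X x)\<^sup>2)"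
  shows "(expectation X)\<^sup>2 \<le> expectation (\<lambda>x. (X x)\<^sup>2)"
  using variance_eq[OF assms] variance_positive[of X] by simp

lemma convex_comb_mono:
  fixes a c b1 b2 :: real
  assumes "c \<le> a" "b1 \<le> b2"
  shows "b1 * a + (1 - b1) * c \<le> b2 * a + (1 - b2) * c"
proof -
  have "b2 * a + (1 - b2) * c - (b1 * a + (1 - b1) * c) = (b2 - b1) * (a - c)"
    by (simp add: algebra_simps)
  moreover have "0 \<le> (b2 - b1) * (a - c)" using assms by simp
  ultimately show ?thesis by linarith
qed

lemma convex_comb_strict_mono:
  fixes a c b1 b2 :: real
  assumes "c < a" "b1 < b2"
  shows "b1 * a + (1 - b1) * c < b2 * a + (1 - b2) * c"
proof -
  have "b2 * a + (1 - b2) * c - (b1 * a + (1 - b1) * c) = (b2 - b1) * (a - c)"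
    by (simp add: algebra_simps)
  moreover have "0 < (b2 - b1) * (a - c)" using assms by simp
  ultimately show ?thesis by linarith
qed

lemma sum_squares_div_sum_le:
  fixes x :: "'i \<Rightarrow> real"
  assumes x: "\<And>i. i \<in> I \<Longrightarrow> 0 \<le> x i" "\<And>i. i \<in> I \<Longrightarrow> x i \<le> W" and "0 \<le> W"
  shows "(\<Sum>i\<in>I. (x i)\<^sup>2) / (\<Sum>i\<in>I. x i) \<le> W"
proof (cases "(\<Sum>i\<in>I. x i) = 0")
  case True
  then show ?thesis using \<open>0 \<le> W\<close> by simp
next
  case False
  moreover have "0 \<le> (\<Sum>i\<in>I. x i)"
    using x(1) by (rule sum_nonneg)
  ultimately have pos: "0 < (\<Sum>i\<in>I. x i)"
    by linarith
  have "(\<Sum>i\<in>I. (x i)\<^sup>2) \<le> (\<Sum>i\<in>I. W * x i)"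
    unfolding power2_eq_square using x by (intro sum_mono mult_right_mono) auto
  also have "\<dots> = W * (\<Sum>i\<in>I. x i)"
    by (rule sum_distrib_left[symmetric])
  finally show ?thesis
    using pos by (simp only: pos_divide_le_eq)
qed

lemma betaL_bounds: "0 < betaL l" "betaL l \<le> 1"
  unfolding betaL_def by linarith+

lemma nat_floor_ge_1: "1 \<le> l \<Longrightarrow> 1 \<le> nat \<lfloor>l\<rfloor>"
  by (subst le_nat_iff) auto

subsection \<open>Products of probability spaces\<close>

lemma prob_space_density:
  assumes "f \<in> borel_measurable M" "(\<integral>\<^sup>+x. ennreal (f x) \<partial>M) = 1"
  shows "prob_space (density M (\<lambda>x. ennreal (f x)))"
  using assms by (intro prob_spaceI) (simp add: emeasure_density)

lemma borel_measurable_PiM_component_comp: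
  assumes "f \<in> borel_measurable (M i)"
  shows "(\<lambda>z. f (z i)) \<in> borel_measurable (PiM I M)"
proof (cases "i \<in> I")
  case True
  show ?thesis
    by (rule measurable_compose[OF measurable_component_singleton[OF True, of M] assms])
next
  case False
  have "f undefined = f (z i)" if "z \<in> space (PiM I M)" for z
    using PiE_arb[OF that[unfolded space_PiM] False] by (rule arg_cong[symmetric])
  then show ?thesis
    by (rule measurable_cong[THEN iffD1, OF _ borel_measurable_const])
qed

lemma (in product_prob_space) integral_PiM_restrict:
  fixes g :: "_ \<Rightarrow> 'b::{banach, second_countable_topology}"
  assumes "J \<subseteq> K" "finite K" "g \<in> borel_measurable (PiM J M)"
  shows "(\<integral>z. g (restrict z J) \<partial>PiM K M) = integral\<^sup>L (PiM J M) g"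
proof -
  have "integral\<^sup>L (PiM J M) g = integral\<^sup>L (distr (PiM K M) (PiM J M) (\<lambda>z. restrict z J)) g"
    using distr_restrict[OF assms(1,2)] by (rule arg_cong[where f="\<lambda>N. integral\<^sup>L N g"])
  also have "\<dots> = (\<integral>z. g (restrict z J) \<partial>PiM K M)"
    by (rule integral_distr[OF measurable_restrict_subset[OF assms(1)] assms(3)])
  finally show ?thesis ..
qed

lemma integral_PiM_permute:
  fixes f :: "_ \<Rightarrow> 'b::{banach, second_countable_topology}"
  assumes N: "prob_space N" and t: "t permutes I" and f: "f \<in> borel_measurable (PiM I (\<lambda>_. N))"
  shows "(\<integral>z. f (\<lambda>i\<in>I. z (t i)) \<partial>PiM I (\<lambda>_. N)) = integral\<^sup>L (PiM I (\<lambda>_. N)) f"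
proof -
  have t_inj: "inj_on t I" and t_into: "t \<in> I \<rightarrow> I"
    using permutes_imp_bij[OF t] by (auto simp: bij_betw_def)
  have T: "(\<lambda>z. \<lambda>i\<in>I. z (t i)) \<in> measurable (PiM I (\<lambda>_. N)) (PiM I (\<lambda>_. N))"
  proof (rule measurable_restrict)
    fix i assume "i \<in> I"
    then show "(\<lambda>z. z (t i)) \<in> measurable (PiM I (\<lambda>_. N)) N"
      using t_into by (intro measurable_component_singleton) auto
  qed
  have "distr (PiM I (\<lambda>_. N)) (PiM I (\<lambda>_. N)) (\<lambda>z. \<lambda>i\<in>I. z (t i)) = PiM I (\<lambda>_. N)"
    using distr_PiM_reindex[of I "\<lambda>_. N", OF N t_inj t_into] .
  then have "integral\<^sup>L (PiM I (\<lambda>_. N)) f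
      = integral\<^sup>L (distr (PiM I (\<lambda>_. N)) (PiM I (\<lambda>_. N)) (\<lambda>z. \<lambda>i\<in>I. z (t i))) f"
    by (rule arg_cong[where f="\<lambda>N. integral\<^sup>L N f", symmetric])
  also have "\<dots> = (\<integral>z. f (\<lambda>i\<in>I. z (t i)) \<partial>PiM I (\<lambda>_. N))"
    by (rule integral_distr[OF T f])
  finally show ?thesis ..
qed

lemma indicator_PiE_eq_prod:
  assumes "finite I" "z \<in> extensional I"
  shows "indicator (PiE I A) z = (\<Prod>i\<in>I. indicator (A i) (z i) :: 'b::comm_semiring_1)"
proof (cases "z \<in> PiE I A")
  case True
  then show ?thesis by (simp add: PiE_iff)
next
  case False
  with assms(2) obtain i where "i \<in> I" "z i \<notin> A i" by (auto simp: PiE_iff)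
  with False show ?thesis by (simp add: prod_zero[OF assms(1)] bexI[of _ i])
qed

lemma PiM_density_component:
  assumes N: "sigma_finite_measure N" "sigma_finite_measure (density N f)"
    and f[measurable]: "f \<in> borel_measurable N" and I: "finite I" "j \<in> I"
  shows "PiM I (\<lambda>i. if i = j then density N f else N) = density (PiM I (\<lambda>_. N)) (\<lambda>z. f (z j))"
proof -
  interpret PN: product_sigma_finite "\<lambda>_. N"
    using N by (simp add: product_sigma_finite_def)
  interpret PD: product_sigma_finite "\<lambda>i. if i = j then density N f else N"
    using N by (simp add: product_sigma_finite_def)
  show ?thesis
  proof (rule PD.PiM_eqI[symmetric])
    show "sets (density (PiM I (\<lambda>_. N)) (\<lambda>z. f (z j))) = sets (PiM I (\<lambda>i. if i = j then density N f else N))"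
      unfolding sets_density by (rule sets_PiM_cong) simp_all
  next
    fix A assume "\<And>i. i \<in> I \<Longrightarrow> A i \<in> sets (if i = j then density N f else N)"
    then have A: "A i \<in> sets N" if "i \<in> I" for i
      using that by (metis sets_density)
    define g where "g i x = (if i = j then f x else 1) * indicator (A i) x" for i x
    have g_measurable: "g i \<in> borel_measurable N" if "i \<in> I" for i
      using A[OF that] unfolding g_def by measurable
    have "emeasure (density (PiM I (\<lambda>_. N)) (\<lambda>z. f (z j))) (PiE I A)
        = (\<integral>\<^sup>+z. f (z j) * indicator (PiE I A) z \<partial>PiM I (\<lambda>_. N))"
      using I A by (intro emeasure_density sets_PiM_I_finite) auto
    also have "\<dots> = (\<integral>\<^sup>+z. (\<Prod>i\<in>I. g i (z i)) \<partial>PiM I (\<lambda>_. N))"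
    proof (rule nn_integral_cong)
      fix z assume "z \<in> space (PiM I (\<lambda>_. N))"
      then have "z \<in> extensional I" by (simp add: space_PiM PiE_def)
      moreover have "(\<Prod>i\<in>I. if i = j then f (z i) else 1) = f (z j)"
        using I by (simp add: prod.delta)
      ultimately show "f (z j) * indicator (PiE I A) z = (\<Prod>i\<in>I. g i (z i))"
        unfolding g_def prod.distrib by (simp only: indicator_PiE_eq_prod[OF I(1)])
    qed
    also have "\<dots> = (\<Prod>i\<in>I. integral\<^sup>N N (g i))"
      using I(1) g_measurable by (rule PN.product_nn_integral_prod)
    also have "\<dots> = (\<Prod>i\<in>I. emeasure (if i = j then density N f else N) (A i))"
    proof (rule prod.cong[OF refl])
      fix i assume "i \<in> I"
      then show "integral\<^sup>N N (g i) = emeasure (if i = j then density N f else N) (A i)"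
        using A[of i] unfolding g_def by (cases "i = j") (simp_all add: emeasure_density mult.commute)
    qed
    finally show "emeasure (density (PiM I (\<lambda>_. N)) (\<lambda>z. f (z j))) (PiE I A)
        = (\<Prod>i\<in>I. emeasure (if i = j then density N f else N) (A i))" .
  qed (rule I(1))
qed

locale target_proposal =
  fixes M :: "'a measure" and p q :: "'a \<Rightarrow> real"
  assumes p_measurable[measurable]: "p \<in> borel_measurable M"
    and q_measurable[measurable]: "q \<in> borel_measurable M"
    and p_nonneg: "\<And>x. x \<in> space M \<Longrightarrow> 0 \<le> p x"
    and q_nonneg: "\<And>x. x \<in> space M \<Longrightarrow> 0 \<le> q x"
    and p_integral: "(\<integral>\<^sup>+x. ennreal (p x) \<partial>M) = 1"
    and q_integral: "(\<integral>\<^sup>+x. ennreal (q x) \<partial>M) = 1"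
    and q_pos: "\<And>x. x \<in> space M \<Longrightarrow> 0 < p x \<Longrightarrow> 0 < q x"
begin

abbreviation "w \<equiv> wt p q"
abbreviation "target \<equiv> density M (\<lambda>x. ennreal (p x))"
abbreviation "proposal \<equiv> density M (\<lambda>x. ennreal (q x))"

definition factor :: "nat \<Rightarrow> 'a measure" where
  "factor i = (if i = 1 then target else proposal)"

abbreviation sample :: "nat \<Rightarrow> (nat \<Rightarrow> 'a) measure" where
  "sample m \<equiv> PiM {1..m} factor"

abbreviation iid :: "nat \<Rightarrow> (nat \<Rightarrow> 'a) measure" where
  "iid m \<equiv> PiM {1..m} (\<lambda>_. proposal)"

definition wsum :: "nat \<Rightarrow> (nat \<Rightarrow> 'a) \<Rightarrow> real" where
  "wsum k z = (\<Sum>i\<in>{1..k}. w (z i))"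

text \<open>
  In the notation of the header, sample m is the law of (z_1, ..., z_m), share k is s_k, and
  mixed_moment n b is \<epsilon>_s(\<lambda>) for \<lfloor>\<lambda>\<rfloor> = n and \<beta>(\<lambda>) = b.
\<close>

definition share :: "nat \<Rightarrow> (nat \<Rightarrow> 'a) \<Rightarrow> real" where
  "share k z = w (z 1) / wsum k z"

definition mixed_share :: "nat \<Rightarrow> real \<Rightarrow> (nat \<Rightarrow> 'a) \<Rightarrow> real" where
  "mixed_share n b z = b * share n z + (1 - b) * share (n + 1) z"

definition mixed_moment :: "nat \<Rightarrow> real \<Rightarrow> real" where
  "mixed_moment n b = (\<integral>z. (mixed_share n b z)\<^sup>2 \<partial>sample (n + 1))"

lemma w_measurable[measurable]: "w \<in> borel_measurable M"
  unfolding wt_def by measurable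

lemma w_nonneg: "x \<in> space M \<Longrightarrow> 0 \<le> w x"
  unfolding wt_def using p_nonneg q_nonneg by auto

lemma w_pos_iff: "x \<in> space M \<Longrightarrow> 0 < w x \<longleftrightarrow> 0 < p x"
  unfolding wt_def using q_pos by auto

lemma w_eq_0_outside_supp: "x \<notin> supp p \<Longrightarrow> w x = 0"
  unfolding wt_def supp_def by simp

lemma p_eq_q_times_w:
  assumes "x \<in> space M" shows "p x = q x * w x"
proof (cases "0 < p x")
  case True
  then show ?thesis using q_pos[OF assms] by (simp add: wt_def)
next
  case False
  then show ?thesis using p_nonneg[OF assms] by (simp add: wt_def)
qed

lemma target_eq_density_proposal: "target = density proposal (\<lambda>x. ennreal (w x))"
proof -
  have "density proposal (\<lambda>x. ennreal (w x)) = density M (\<lambda>x. ennreal (q x) * ennreal (w x))"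
    by (rule density_density_eq) measurable
  also have "\<dots> = target"
    using q_nonneg w_nonneg p_eq_q_times_w
    by (intro density_cong) (auto simp: ennreal_mult[symmetric])
  finally show ?thesis ..
qed

lemma prob_space_target: "prob_space target"
  using p_integral by (rule prob_space_density[OF p_measurable])

lemma prob_space_proposal: "prob_space proposal"
  using q_integral by (rule prob_space_density[OF q_measurable])

lemma prob_space_factor: "prob_space (factor i)"
  unfolding factor_def using prob_space_target prob_space_proposal by simp

lemma sets_factor[simp, measurable_cong]: "sets (factor i) = sets M"
  unfolding factor_def by simp

lemma space_factor[simp]: "space (factor i) = space M"
  unfolding factor_def by simp

interpretation factors: product_prob_space factor
  by (intro product_prob_space.intro product_sigma_finite.intro product_prob_space_axioms.intro)
     (auto intro: prob_space_imp_sigma_finite prob_space_factor)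

lemma prob_space_sample: "prob_space (sample m)"
  by (rule prob_space_PiM) (rule prob_space_factor)

lemma prodM_eq_sample: "prodM M p q m = sample m"
  unfolding prodM_def factor_def ..

lemma w_coord_measurable[measurable]:
  "(\<lambda>z. w (z i)) \<in> borel_measurable (PiM I factor)"
  "(\<lambda>z. w (z i)) \<in> borel_measurable (PiM I (\<lambda>_. proposal))"
  by (auto intro: borel_measurable_PiM_component_comp)

abbreviation "support \<equiv> {x \<in> space M. 0 < w x}"

lemma AE_target_support: "AE x in target. x \<in> support"
proof -
  have "AE x in M. 0 < ennreal (p x) \<longrightarrow> x \<in> support"
    using w_pos_iff by (auto intro: AE_I2)
  moreover have "(\<lambda>x. ennreal (p x)) \<in> borel_measurable M" by measurable
  ultimately show ?thesis
    by (simp add: AE_density)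
qed

lemma AE_sample_w_pos: "1 \<le> m \<Longrightarrow> AE z in sample m. 0 < w (z 1)"
proof (rule AE_PiM_component[OF prob_space_factor])
  show "AE x in factor 1. 0 < w x"
    unfolding factor_def using AE_target_support by (auto elim: AE_mp)
qed simp

lemma emeasure_factor_support: "emeasure (factor i) support \<noteq> 0"
proof -
  interpret target: prob_space target
    by (rule prob_space_target)
  have target_support: "emeasure target support = 1"
    using AE_target_support by (intro target.emeasure_eq_1_AE) simp_all
  moreover have "emeasure proposal support \<noteq> 0"
  proof
    assume "emeasure proposal support = 0"
    then have "AE x in proposal. x \<in> support \<longrightarrow> w x = 0"
      by (intro AE_I'[of support]) auto
    then have "support \<in> null_sets (density proposal (\<lambda>x. ennreal (w x)))"
      by (subst null_sets_density_iff) auto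
    then have "emeasure target support = 0"
      unfolding target_eq_density_proposal[symmetric] by (rule null_setsD1)
    with target_support show False by simp
  qed
  ultimately show ?thesis
    by (simp add: factor_def)
qed

lemma wsum_measurable[measurable]:
  "wsum k \<in> borel_measurable (PiM I factor)"
  "wsum k \<in> borel_measurable (PiM I (\<lambda>_. proposal))"
  unfolding wsum_def
  by (auto intro!: borel_measurable_sum w_coord_measurable)

lemma share_measurable[measurable]: "share k \<in> borel_measurable (PiM I factor)"
  unfolding share_def by (intro borel_measurable_divide wsum_measurable w_coord_measurable)

lemma mixed_share_measurable[measurable]: "mixed_share n b \<in> borel_measurable (PiM I factor)"
  unfolding mixed_share_def by measurable

lemma w_le_wsum:
  assumes "i \<in> {1..k}" "z ` {1..k} \<subseteq> space M"
  shows "w (z i) \<le> wsum k z"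
  unfolding wsum_def using assms by (intro member_le_sum) (auto intro!: w_nonneg)

lemma first_weight_bounds:
  assumes "1 \<le> k" "z ` {1..k} \<subseteq> space M"
  shows "0 \<le> w (z 1)" "w (z 1) \<le> wsum k z"
  using assms by (auto intro!: w_nonneg w_le_wsum)

lemma share_bounds:
  assumes "1 \<le> k" "z ` {1..k} \<subseteq> space M"
  shows "0 \<le> share k z" "share k z \<le> 1"
  using first_weight_bounds[OF assms] unfolding share_def by (auto simp: divide_le_eq_1)

lemma share_pos:
  assumes "1 \<le> k" "z ` {1..k} \<subseteq> space M" "0 < w (z 1)"
  shows "0 < share k z"
  using first_weight_bounds[OF assms(1,2)] assms(3) unfolding share_def by simp

lemma wsum_Suc: "wsum (n + 1) z = wsum n z + w (z (n + 1))"
  unfolding wsum_def by simp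

lemma share_Suc_le:
  assumes "1 \<le> n" "z ` {1..n + 1} \<subseteq> space M"
  shows "share (n + 1) z \<le> share n z"
proof -
  have "z ` {1..n} \<subseteq> space M" using assms(2) by auto
  note w1 = first_weight_bounds[OF assms(1) this]
  have "0 \<le> w (z (n + 1))" using assms(2) by (auto intro!: w_nonneg)
  then show ?thesis
    using w1 unfolding share_def wsum_Suc
    by (cases "w (z 1) = 0") (auto intro: divide_left_mono)
qed

lemma share_Suc_less:
  assumes "1 \<le> n" "z ` {1..n + 1} \<subseteq> space M" "0 < w (z 1)" "0 < w (z (n + 1))"
  shows "share (n + 1) z < share n z"
proof -
  have "z ` {1..n} \<subseteq> space M" using assms(2) by auto
  then have "w (z 1) \<le> wsum n z" using first_weight_bounds assms(1) by blast
  then show ?thesis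
    unfolding share_def wsum_Suc using assms(3,4) by (intro divide_strict_left_mono) auto
qed

lemma mixed_share_bounds:
  assumes "1 \<le> n" "z ` {1..n + 1} \<subseteq> space M" "0 \<le> b" "b \<le> 1"
  shows "share (n + 1) z \<le> mixed_share n b z" "mixed_share n b z \<le> share n z"
proof -
  have le: "share (n + 1) z \<le> share n z"
    using assms(1,2) by (rule share_Suc_le)
  show "share (n + 1) z \<le> mixed_share n b z" "mixed_share n b z \<le> share n z"
    using convex_comb_mono[OF le, of 0 b] convex_comb_mono[OF le, of b 1] assms(3,4)
    by (simp_all add: mixed_share_def)
qed

lemma mixed_share_sq_le_1:
  assumes "1 \<le> n" "z ` {1..n + 1} \<subseteq> space M" "0 \<le> b" "b \<le> 1"
  shows "(mixed_share n b z)\<^sup>2 \<le> 1"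
proof -
  have "z ` {1..n} \<subseteq> space M" using assms(2) by auto
  then have "0 \<le> share (n + 1) z" "share n z \<le> 1"
    using share_bounds assms(1,2) by simp_all
  then have "\<bar>mixed_share n b z\<bar> \<le> 1"
    using mixed_share_bounds[OF assms] by linarith
  then show ?thesis
    by (simp add: abs_square_le_1)
qed

lemma mixed_share_sq_mono:
  assumes "1 \<le> n" "z ` {1..n + 1} \<subseteq> space M" "0 \<le> b1" "b1 \<le> b2"
  shows "(mixed_share n b1 z)\<^sup>2 \<le> (mixed_share n b2 z)\<^sup>2"
proof -
  have le: "share (n + 1) z \<le> share n z"
    using assms(1,2) by (rule share_Suc_le)
  have "0 \<le> share (n + 1) z"
    using assms(1,2) by (simp add: share_bounds)
  also have "\<dots> \<le> mixed_share n b1 z"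
    using convex_comb_mono[OF le, of 0 b1] assms(3) by (simp add: mixed_share_def)
  finally show ?thesis
    using convex_comb_mono[OF le assms(4)] unfolding mixed_share_def by (intro power_mono)
qed

lemma mixed_share_sq_strict_mono:
  assumes "1 \<le> n" "z ` {1..n + 1} \<subseteq> space M" "0 \<le> b1" "b1 < b2"
    and "0 < w (z 1)" "0 < w (z (n + 1))"
  shows "(mixed_share n b1 z)\<^sup>2 < (mixed_share n b2 z)\<^sup>2"
proof -
  have less: "share (n + 1) z < share n z"
    using assms(1,2,5,6) by (rule share_Suc_less)
  have "0 \<le> share (n + 1) z"
    using assms(1,2) by (simp add: share_bounds)
  also have "\<dots> \<le> mixed_share n b1 z"
    using convex_comb_mono[OF less_imp_le[OF less], of 0 b1] assms(3) by (simp add: mixed_share_def)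
  finally show ?thesis
    using convex_comb_strict_mono[OF less assms(4)] unfolding mixed_share_def by (intro power_strict_mono) auto
qed

lemma sample_coords: "z \<in> space (sample m) \<Longrightarrow> k \<le> m \<Longrightarrow> z ` {1..k} \<subseteq> space M"
  by (auto simp: space_PiM PiE_iff)

lemma iid_coords: "z \<in> space (iid m) \<Longrightarrow> z ` {1..m} \<subseteq> space M"
  by (auto simp: space_PiM PiE_iff)

lemma integrable_share:
  assumes "1 \<le> k" "k \<le> m"
  shows "integrable (sample m) (share k)"
proof -
  interpret prob_space "sample m" by (rule prob_space_sample)
  show ?thesis
  proof (rule integrable_const_bound[where B=1])
    show "AE z in sample m. norm (share k z) \<le> 1"
      using share_bounds[OF assms(1) sample_coords[OF _ assms(2)]] by (auto intro: AE_I2)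
  qed (rule share_measurable)
qed

lemma integrable_mixed_share_sq:
  assumes "1 \<le> n" "0 \<le> b" "b \<le> 1"
  shows "integrable (sample (n + 1)) (\<lambda>z. (mixed_share n b z)\<^sup>2)"
proof -
  interpret prob_space "sample (n + 1)" by (rule prob_space_sample)
  show ?thesis
  proof (rule integrable_const_bound[where B=1])
    show "AE z in sample (n + 1). norm ((mixed_share n b z)\<^sup>2) \<le> 1"
      using mixed_share_sq_le_1[OF assms(1) sample_coords[OF _ order_refl] assms(2,3)]
      by (auto intro: AE_I2)
  qed measurable
qed

lemma epsN_eq_integral_share: "epsN M p q k = integral\<^sup>L (sample k) (share k)"
  unfolding epsN_def prodM_eq_sample
proof (intro Bochner_Integration.integral_cong refl)
  fix z
  show "indicator (supp p) (z 1) * (w (z 1) / (\<Sum>i\<in>{1..k}. w (z i))) = share k z"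
    using w_eq_0_outside_supp[of "z 1"] by (cases "z 1 \<in> supp p") (simp_all add: share_def wsum_def)
qed

lemma epsS_eq_mixed_moment: "epsS M p q l = mixed_moment (nat \<lfloor>l\<rfloor>) (betaL l)"
  unfolding epsS_def mixed_moment_def prodM_eq_sample Let_def
proof (intro Bochner_Integration.integral_cong refl)
  fix z
  let ?n = "nat \<lfloor>l\<rfloor>" and ?b = "betaL l"
  show "indicator (supp p) (z 1) * (?b * w (z 1) / (\<Sum>i\<in>{1..?n}. w (z i))
      + (1 - ?b) * w (z 1) / (\<Sum>j\<in>{1..?n + 1}. w (z j)))\<^sup>2 = (mixed_share ?n ?b z)\<^sup>2"
    using w_eq_0_outside_supp[of "z 1"]
    by (cases "z 1 \<in> supp p") (simp_all add: mixed_share_def share_def wsum_def)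
qed

lemma share_restrict: "1 \<le> k \<Longrightarrow> k \<le> m \<Longrightarrow> share k (restrict z {1..m}) = share k z"
  unfolding share_def wsum_def by (intro arg_cong2[where f="(/)"] sum.cong) auto

lemma integral_sample_share:
  fixes g :: "real \<Rightarrow> real"
  assumes "1 \<le> k" "k \<le> m" "g \<in> borel_measurable borel"
  shows "(\<integral>z. g (share k z) \<partial>sample m) = (\<integral>z. g (share k z) \<partial>sample k)"
proof -
  have "(\<integral>z. g (share k z) \<partial>sample m) = (\<integral>z. g (share k (restrict z {1..k})) \<partial>sample m)"
    using share_restrict[OF assms(1) order_refl] by simp
  also have "\<dots> = (\<integral>z. g (share k z) \<partial>sample k)"
    using assms by (intro factors.integral_PiM_restrict) auto
  finally show ?thesis .
qed

lemma epsN_eq_integral_share_sample: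
  assumes "1 \<le> k" "k \<le> m"
  shows "epsN M p q k = integral\<^sup>L (sample m) (share k)"
  using integral_sample_share[OF assms, of "\<lambda>x. x"] by (simp add: epsN_eq_integral_share)

subsection \<open>The mixed second moment\<close>

lemma mixed_moment_pos:
  assumes "1 \<le> n" "0 \<le> b" "b \<le> 1"
  shows "0 < mixed_moment n b"
proof -
  interpret prob_space "sample (n + 1)" by (rule prob_space_sample)
  have "AE z in sample (n + 1). 0 < w (z 1)"
    by (rule AE_sample_w_pos) simp
  then have "AE z in sample (n + 1). 0 < (mixed_share n b z)\<^sup>2"
    using AE_space
  proof eventually_elim
    case (elim z)
    note coords = sample_coords[OF elim(2) order_refl]
    have "0 < share (n + 1) z"
      using share_pos[OF _ coords elim(1)] by simp
    then show ?case
      using mixed_share_bounds(1)[OF assms(1) coords assms(2,3)] by simp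
  qed
  then show ?thesis
    unfolding mixed_moment_def using integrable_mixed_share_sq[OF assms]
    by (intro expectation_greater)
qed

lemma mixed_moment_mono:
  assumes "1 \<le> n" "0 \<le> b1" "b1 \<le> b2" "b2 \<le> 1"
  shows "mixed_moment n b1 \<le> mixed_moment n b2"
  unfolding mixed_moment_def
proof (rule integral_mono)
  show "integrable (sample (n + 1)) (\<lambda>z. (mixed_share n b1 z)\<^sup>2)"
    "integrable (sample (n + 1)) (\<lambda>z. (mixed_share n b2 z)\<^sup>2)"
    using assms by (intro integrable_mixed_share_sq; linarith)+
  fix z assume "z \<in> space (sample (n + 1))"
  then show "(mixed_share n b1 z)\<^sup>2 \<le> (mixed_share n b2 z)\<^sup>2"
    using assms(1,2,3) by (intro mixed_share_sq_mono sample_coords) auto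
qed

lemma mixed_moment_strict_mono:
  assumes n: "1 \<le> n" and b: "0 \<le> b1" "b1 < b2" "b2 \<le> 1"
  shows "mixed_moment n b1 < mixed_moment n b2"
proof -
  interpret prob_space "sample (n + 1)" by (rule prob_space_sample)
  define A where "A = PiE {1..n + 1} (\<lambda>i. if i = 1 \<or> i = n + 1 then support else space M)"
  have A_sets: "A \<in> sets (sample (n + 1))"
    unfolding A_def by (rule sets_PiM_I_finite) auto
  have "emeasure (sample (n + 1)) A
      = (\<Prod>i\<in>{1..n + 1}. emeasure (factor i) (if i = 1 \<or> i = n + 1 then support else space M))"
    unfolding A_def by (rule factors.emeasure_PiM) auto
  also have "\<dots> \<noteq> 0"
    using emeasure_factor_support prob_space.emeasure_space_1[OF prob_space_factor] by auto
  finally have A_pos: "emeasure (sample (n + 1)) A \<noteq> 0" .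
  show ?thesis
    unfolding mixed_moment_def
  proof (rule integral_less_AE[OF _ _ A_pos A_sets])
    show "integrable (sample (n + 1)) (\<lambda>z. (mixed_share n b1 z)\<^sup>2)"
      "integrable (sample (n + 1)) (\<lambda>z. (mixed_share n b2 z)\<^sup>2)"
      using assms by (intro integrable_mixed_share_sq; linarith)+
    show "AE z in sample (n + 1). (mixed_share n b1 z)\<^sup>2 \<le> (mixed_share n b2 z)\<^sup>2"
      using n b by (intro AE_I2 mixed_share_sq_mono sample_coords) auto
    show "AE z in sample (n + 1). z \<in> A \<longrightarrow> (mixed_share n b1 z)\<^sup>2 \<noteq> (mixed_share n b2 z)\<^sup>2"
    proof (intro AE_I2 impI)
      fix z assume "z \<in> space (sample (n + 1))" "z \<in> A"
      have "z i \<in> support" if "i = 1 \<or> i = n + 1" for i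
        using PiE_mem[OF \<open>z \<in> A\<close>[unfolded A_def], of i] that n by auto
      then have "0 < w (z 1)" "0 < w (z (n + 1))"
        by auto
      then show "(mixed_share n b1 z)\<^sup>2 \<noteq> (mixed_share n b2 z)\<^sup>2"
        using mixed_share_sq_strict_mono[OF n sample_coords[OF \<open>z \<in> space _\<close> order_refl] b(1,2)]
        by simp
    qed
  qed
qed

text \<open>Both sides are E s_(n+1)^2; on the right the extra coordinate z_(n+2) integrates out.\<close>

lemma mixed_moment_0_eq: "1 \<le> n \<Longrightarrow> mixed_moment n 0 = mixed_moment (n + 1) 1"
  unfolding mixed_moment_def mixed_share_def
  using integral_sample_share[of "n + 1" "n + 2" "\<lambda>x. x\<^sup>2"] by simp

lemma mixed_moment_1_antimono:
  assumes "1 \<le> n" "n \<le> n'"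
  shows "mixed_moment n' 1 \<le> mixed_moment n 1"
  using assms(2)
proof (induction n' rule: dec_induct)
  case (step m)
  have "1 \<le> m" using assms(1) step(1) by simp
  then have "mixed_moment (m + 1) 1 = mixed_moment m 0"
    by (simp add: mixed_moment_0_eq)
  also have "\<dots> \<le> mixed_moment m 1"
    using \<open>1 \<le> m\<close> by (intro mixed_moment_mono) auto
  finally show ?case
    using step(3) by simp
qed simp

lemma mixed_moment_1_1: "mixed_moment 1 1 = 1"
proof -
  interpret prob_space "sample (1 + 1)" by (rule prob_space_sample)
  have "AE z in sample (1 + 1). 0 < w (z 1)"
    by (rule AE_sample_w_pos) simp
  then have "AE z in sample (1 + 1). (mixed_share 1 1 z)\<^sup>2 = 1"
    by eventually_elim (simp add: mixed_share_def share_def wsum_def)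
  then have "mixed_moment 1 1 = (\<integral>z. 1 \<partial>sample (1 + 1))"
    unfolding mixed_moment_def by (intro integral_cong_AE) simp_all
  then show ?thesis
    using prob_space by simp
qed

lemma mixed_moment_1_le_epsN:
  assumes "1 \<le> n"
  shows "mixed_moment n 1 \<le> epsN M p q n"
  unfolding mixed_moment_def epsN_eq_integral_share_sample[OF assms le_add1[of n 1]]
proof (rule integral_mono)
  show "integrable (sample (n + 1)) (\<lambda>z. (mixed_share n 1 z)\<^sup>2)"
    using assms by (intro integrable_mixed_share_sq) auto
  show "integrable (sample (n + 1)) (share n)"
    using assms by (intro integrable_share) auto
  fix z assume "z \<in> space (sample (n + 1))"
  then have "0 \<le> share n z" "share n z \<le> 1"
    using share_bounds[OF assms sample_coords] by auto
  then show "(mixed_share n 1 z)\<^sup>2 \<le> share n z"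
    by (simp add: mixed_share_def power2_eq_square mult_left_le_one_le)
qed

lemma epsN_mix_sq_le_mixed_moment:
  assumes "1 \<le> n" "0 \<le> b" "b \<le> 1"
  shows "(b * epsN M p q n + (1 - b) * epsN M p q (n + 1))\<^sup>2 \<le> mixed_moment n b"
proof -
  interpret prob_space "sample (n + 1)" by (rule prob_space_sample)
  have int: "integrable (sample (n + 1)) (share n)" "integrable (sample (n + 1)) (share (n + 1))"
    using assms(1) integrable_share[of n "n + 1"] integrable_share[of "n + 1" "n + 1"] by simp_all
  then have "b * epsN M p q n + (1 - b) * epsN M p q (n + 1) = expectation (mixed_share n b)"
    using epsN_eq_integral_share_sample[of n "n + 1"] epsN_eq_integral_share[of "n + 1"] assms(1)
    by (simp add: mixed_share_def[abs_def])
  also have "(expectation (mixed_share n b))\<^sup>2 \<le> expectation (\<lambda>z. (mixed_share n b z)\<^sup>2)"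
    using int integrable_mixed_share_sq[OF assms]
    by (intro square_expectation_le) (simp_all add: mixed_share_def[abs_def])
  finally show ?thesis
    unfolding mixed_moment_def .
qed

subsection \<open>Change of measure and exchangeability\<close>

lemma sample_eq_density_iid:
  assumes "1 \<le> m"
  shows "sample m = density (iid m) (\<lambda>z. ennreal (w (z 1)))"
proof -
  have factor_eq: "factor = (\<lambda>i. if i = 1 then density proposal (\<lambda>x. ennreal (w x)) else proposal)"
    by (simp add: fun_eq_iff factor_def flip: target_eq_density_proposal)
  have "sigma_finite_measure proposal" "sigma_finite_measure (density proposal (\<lambda>x. ennreal (w x)))"
    using prob_space_proposal prob_space_target
    by (auto simp flip: target_eq_density_proposal intro: prob_space_imp_sigma_finite)
  then show ?thesis
    unfolding factor_eq using assms by (intro PiM_density_component) auto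
qed

lemma epsN_eq_integral_iid:
  assumes "1 \<le> k"
  shows "epsN M p q k = (\<integral>z. (w (z 1))\<^sup>2 / wsum k z \<partial>iid k)"
proof -
  have "epsN M p q k = integral\<^sup>L (density (iid k) (\<lambda>z. ennreal (w (z 1)))) (share k)"
    unfolding epsN_eq_integral_share sample_eq_density_iid[OF assms] by (rule refl)
  also have "\<dots> = (\<integral>z. w (z 1) *\<^sub>R share k z \<partial>iid k)"
  proof (rule integral_density)
    show "AE z in iid k. 0 \<le> w (z 1)"
      using assms by (intro AE_I2 w_nonneg) (auto simp: space_PiM PiE_iff)
  qed (unfold share_def, measurable)
  also have "\<dots> = (\<integral>z. (w (z 1))\<^sup>2 / wsum k z \<partial>iid k)"
    by (simp add: share_def power2_eq_square)
  finally show ?thesis .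
qed

lemma integral_iid_exchange:
  assumes "i \<in> {1..k}"
  shows "(\<integral>z. (w (z i))\<^sup>2 / wsum k z \<partial>iid k) = (\<integral>z. (w (z 1))\<^sup>2 / wsum k z \<partial>iid k)"
proof -
  let ?t = "Transposition.transpose 1 i"
  have t: "?t permutes {1..k}"
    using assms by (intro permutes_swap_id) auto
  have wsum_t: "wsum k (\<lambda>j\<in>{1..k}. z (?t j)) = wsum k z" for z
    unfolding wsum_def using sum.permute[OF t, of "\<lambda>j. w (z j)"] by (simp add: comp_def)
  have "(\<integral>z. (w (z 1))\<^sup>2 / wsum k z \<partial>iid k)
      = (\<integral>z. (w ((\<lambda>j\<in>{1..k}. z (?t j)) 1))\<^sup>2 / wsum k (\<lambda>j\<in>{1..k}. z (?t j)) \<partial>iid k)"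
    by (rule integral_PiM_permute[OF prob_space_proposal t, symmetric]) measurable
  also have "\<dots> = (\<integral>z. (w (z i))\<^sup>2 / wsum k z \<partial>iid k)"
    unfolding wsum_t using assms by simp
  finally show ?thesis ..
qed

lemma space_nonempty: "space M \<noteq> {}"
  using p_integral by (auto simp: nn_integral_empty)

lemma epsN_le_Sup_div:
  assumes k: "1 \<le> k" and bdd: "bdd_above (w ` space M)"
  shows "epsN M p q k \<le> (SUP x\<in>space M. w x) / k"
proof -
  let ?W = "SUP x\<in>space M. w x"
  interpret prob_space "iid k"
    by (rule prob_space_PiM) (rule prob_space_proposal)
  have w_le: "w x \<le> ?W" if "x \<in> space M" for x
    using that bdd by (rule cSUP_upper)
  have W_nonneg: "0 \<le> ?W"
    using space_nonempty w_le w_nonneg by (meson ex_in_conv order_trans)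
  define h where "h i z = (w (z i))\<^sup>2 / wsum k z" for i z
  have h_nonneg: "0 \<le> h i z" if "z \<in> space (iid k)" "i \<in> {1..k}" for i z
    using iid_coords[OF that(1)] that(2) unfolding h_def wsum_def
    by (intro divide_nonneg_nonneg sum_nonneg) (auto intro!: w_nonneg)
  have sum_h_le: "(\<Sum>i\<in>{1..k}. h i z) \<le> ?W" if "z \<in> space (iid k)" for z
    using iid_coords[OF that] W_nonneg unfolding h_def wsum_def sum_divide_distrib[symmetric]
    by (intro sum_squares_div_sum_le) (auto intro!: w_nonneg w_le)
  have h_integrable: "integrable (iid k) (h i)" if "i \<in> {1..k}" for i
  proof (rule integrable_const_bound[where B="?W"])
    show "AE z in iid k. norm (h i z) \<le> ?W"
    proof (rule AE_I2)
      fix z assume z: "z \<in> space (iid k)"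
      have "h i z \<le> (\<Sum>j\<in>{1..k}. h j z)"
        using that h_nonneg[OF z] by (intro member_le_sum) auto
      then show "norm (h i z) \<le> ?W"
        using sum_h_le[OF z] h_nonneg[OF z that] by simp
    qed
  qed (unfold h_def wsum_def, measurable)
  have "real k * epsN M p q k = (\<Sum>i\<in>{1..k}. epsN M p q k)"
    by simp
  also have "\<dots> = (\<Sum>i\<in>{1..k}. integral\<^sup>L (iid k) (h i))"
    unfolding h_def epsN_eq_integral_iid[OF k] by (intro sum.cong refl integral_iid_exchange[symmetric])
  also have "\<dots> = (\<integral>z. (\<Sum>i\<in>{1..k}. h i z) \<partial>iid k)"
    using h_integrable by (rule Bochner_Integration.integral_sum[symmetric])
  also have "\<dots> \<le> (\<integral>z. ?W \<partial>iid k)"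
    using h_integrable sum_h_le by (intro integral_mono integrable_const) auto
  also have "\<dots> = ?W"
    using prob_space by simp
  finally show ?thesis
    using k by (simp add: pos_le_divide_eq mult.commute)
qed

lemma epsS_pos: "1 \<le> l \<Longrightarrow> 0 < epsS M p q l"
  unfolding epsS_eq_mixed_moment using nat_floor_ge_1 betaL_bounds[of l]
  by (intro mixed_moment_pos) auto

lemma epsS_1: "epsS M p q 1 = 1"
  unfolding epsS_eq_mixed_moment using mixed_moment_1_1 by (simp add: betaL_def)

lemma epsL_sq_le_epsS: "1 \<le> l \<Longrightarrow> (epsL M p q l)\<^sup>2 \<le> epsS M p q l"
  unfolding epsS_eq_mixed_moment epsL_def using nat_floor_ge_1 betaL_bounds[of l]
  by (intro epsN_mix_sq_le_mixed_moment) auto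

lemma epsS_strict_antimono:
  assumes "1 \<le> l1" "l1 < l2"
  shows "epsS M p q l2 < epsS M p q l1"
proof -
  define n1 n2 where "n1 = nat \<lfloor>l1\<rfloor>" and "n2 = nat \<lfloor>l2\<rfloor>"
  have n1: "1 \<le> n1" and n2: "1 \<le> n2" and "n1 \<le> n2"
    using assms nat_floor_ge_1[of l1] nat_floor_ge_1[of l2]
    by (auto simp: n1_def n2_def floor_mono nat_mono)
  note b1 = betaL_bounds[of l1] and b2 = betaL_bounds[of l2]
  show ?thesis
    unfolding epsS_eq_mixed_moment n1_def[symmetric] n2_def[symmetric]
  proof (cases "n1 = n2")
    case True
    then have "\<lfloor>l1\<rfloor> = \<lfloor>l2\<rfloor>"
      using assms unfolding n1_def n2_def by (subst (asm) eq_nat_nat_iff) auto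
    then have "betaL l2 < betaL l1"
      using assms(2) by (simp add: betaL_def)
    then show "mixed_moment n2 (betaL l2) < mixed_moment n1 (betaL l1)"
      unfolding True using n2 b1 b2 by (intro mixed_moment_strict_mono) auto
  next
    case False
    then have "n1 + 1 \<le> n2" using \<open>n1 \<le> n2\<close> by simp
    have "mixed_moment n2 (betaL l2) \<le> mixed_moment n2 1"
      using n2 b2 by (intro mixed_moment_mono) auto
    also have "\<dots> \<le> mixed_moment (n1 + 1) 1"
      using \<open>n1 + 1 \<le> n2\<close> by (intro mixed_moment_1_antimono) auto
    also have "\<dots> = mixed_moment n1 0"
      using n1 by (simp add: mixed_moment_0_eq)
    also have "\<dots> < mixed_moment n1 (betaL l1)"
      using n1 b1 by (intro mixed_moment_strict_mono) auto
    finally show "mixed_moment n2 (betaL l2) < mixed_moment n1 (betaL l1)" .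
  qed
qed

lemma epsS_le_Sup_div:
  assumes "bdd_above (w ` space M)" "1 \<le> l"
  shows "epsS M p q l \<le> (SUP x\<in>space M. w x) / \<lfloor>l\<rfloor>"
proof -
  have n: "1 \<le> nat \<lfloor>l\<rfloor>"
    using assms(2) by (rule nat_floor_ge_1)
  have "epsS M p q l \<le> mixed_moment (nat \<lfloor>l\<rfloor>) 1"
    unfolding epsS_eq_mixed_moment using n betaL_bounds[of l] by (intro mixed_moment_mono) auto
  also have "\<dots> \<le> epsN M p q (nat \<lfloor>l\<rfloor>)"
    using n by (rule mixed_moment_1_le_epsN)
  also have "\<dots> \<le> (SUP x\<in>space M. w x) / nat \<lfloor>l\<rfloor>"
    using n assms(1) by (rule epsN_le_Sup_div)
  finally show ?thesis
    using assms(2) by simp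
qed

end

theorem lemma8p2:
  fixes M :: "'a measure" and p q :: "'a \<Rightarrow> real"
  assumes "sigma_finite_measure M"
    and "p \<in> borel_measurable M" and "q \<in> borel_measurable M"
    and "\<And>x. x \<in> space M \<Longrightarrow> p x \<ge> 0" and "\<And>x. x \<in> space M \<Longrightarrow> q x \<ge> 0"
    and "(\<integral>\<^sup>+x. ennreal (p x) \<partial>M) = 1" and "(\<integral>\<^sup>+x. ennreal (q x) \<partial>M) = 1"
    and "\<And>x. x \<in> space M \<Longrightarrow> p x > 0 \<Longrightarrow> q x > 0"
  shows "(\<forall>l\<ge>1. epsS M p q l > 0)
    \<and> (\<forall>l1 l2. 1 \<le> l1 \<and> l1 < l2 \<longrightarrow> epsS M p q l2 < epsS M p q l1)
    \<and> (\<forall>l\<ge>1. (epsL M p q l)\<^sup>2 \<le> epsS M p q l)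
    \<and> epsS M p q 1 = 1
    \<and> (bdd_above (wt p q ` space M) \<longrightarrow>
         (\<forall>l\<ge>1. epsS M p q l \<le> (SUP x\<in>space M. wt p q x) / real_of_int \<lfloor>l\<rfloor>))"
proof -
  interpret target_proposal M p q
    using assms(2-8) by unfold_locales
  show ?thesis
    using epsS_pos epsS_strict_antimono epsL_sq_le_epsS epsS_1 epsS_le_Sup_div by blast
qed

end
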